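(* Let $M$ be a sharp, integral monoid and $\phi:\Gamma\to\Gamma'$ a harmonic, non-degenerate morphism of $M$-metrised graphs. Then for every effective divisor $D'\in\operatorname{Div}(\Gamma')$ we have $r(\phi^*(D'))\ge r(D')$.
   Context: Monoids are commutative, sharp (only unit $0$), integral (cancellative), with groupification $M^{gp}$; $\langle m\rangle=\{km:k\in\mathbb Z\}\subseteq M^{gp}$ and for $x=km$, $m\ne0$, $x/m:=k$. A graph is $(X,r,i)$, $X$ finite, $r$ idempotent, $i$ an involution, $i(x)=x\iff r(x)=x$; vertices $V$ = fixed points, half-edges $H=X\setminus V$, edges $\{e,i(e)\}$ joining $r(e),r(i(e))$, $H_v=\{e\in H:r(e)=v\}$; graphs are connected. An $M$-metrised graph adds $l:X\to M$ with $l(i(x))=l(x)$, $l(x)=0\iff x\in V$. Divisors: elements of the free abelian group on $V$, partially ordered pointwise; $\operatorname{Div}^k_+$ = effective divisors of degree $k$. $\operatorname{PL}(\Gamma)=\{g:V\to M^{gp}: g(r(e))-g(r(i(e)))\in\langle l(e)\rangle\ \forall e\in H\}$; $\Delta(g)=\sum_{v}\big(\sum_{e\in H_v}\frac{g(v)-g(r(i(e)))}{l(e)}\big)[v]$; principal divisors $\operatorname{Prin}(\Gamma)=\Delta(\operatorname{PL}(\Gamma))$; $D\sim D'$ iff $D-D'\in\operatorname{Prin}(\Gamma)$; $|D|=\{E\ge0: E\sim D\}$; rank $r(D)=\max\{k\in\mathbb Z:|D-F|\ne\emptyset\text{ for all }F\in\operatorname{Div}^k_+(\Gamma)\}$. A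 morphism $\phi:\Gamma\to\Gamma'$ is a map $X\to X'$ with $\phi(V)\subseteq V'$; if $\phi(e)=e'\in H'$ then $\phi(r(e))=r'(e')$, $\phi(r(i(e)))=r'(i'(e'))$, $l'(e')\in\langle l(e)\rangle$; if $\phi(e)=v'\in V'$ then $\phi(r(e))=\phi(r(i(e)))=v'$. Slope $\mu_\phi(e)=l'(\phi(e))/l(e)$ if $\phi(e)\in H'$, else $0$; $m_{\phi,v}(e')=\sum_{e\in H_v,\phi(e)=e'}\mu_\phi(e)$ for $e'\in H'_{\phi(v)}$; harmonic: independent of $e'$ for each $v$, common value $m_\phi(v)$; non-degenerate: $m_\phi(v)>0$ for all $v$. $\phi^*(D')=\sum_{v}D'(\phi(v))m_\phi(v)[v]$. *)

theory Defs
  imports Main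
begin

text \<open>A commutative, sharp, integral monoid M is represented as a subset M of an
abelian group 'g (its groupification): M contains 0, is closed under +, is sharp,
and generates 'g as a group (every element is a difference of two elements of M).
Integrality is automatic since M embeds into 'g.\<close>

definition sharp_integral_monoid :: "'g::ab_group_add set \<Rightarrow> bool" where
  "sharp_integral_monoid M \<longleftrightarrow>
     0 \<in> M \<and> (\<forall>a\<in>M. \<forall>b\<in>M. a + b \<in> M) \<and>
     (\<forall>a\<in>M. \<forall>b\<in>M. a + b = 0 \<longrightarrow> a = 0 \<and> b = 0) \<and>
     (\<forall>x. \<exists>a\<in>M. \<exists>b\<in>M. x = a - b)"

definition zmul :: "int \<Rightarrow> 'g::ab_group_add \<Rightarrow> 'g" where
  "zmul k x = (if 0 \<le> k then (\<Sum>_<nat k. x) else - (\<Sum>_<nat (-k). x))"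

definition zspan :: "'g::ab_group_add \<Rightarrow> 'g set" where
  "zspan m = range (\<lambda>k. zmul k m)"

definition zdiv :: "'g::ab_group_add \<Rightarrow> 'g \<Rightarrow> int" where
  "zdiv x m = (THE k. x = zmul k m)"

record ('x, 'g) mgraph =
  gX :: "'x set"
  gr :: "'x \<Rightarrow> 'x"
  gi :: "'x \<Rightarrow> 'x"
  gl :: "'x \<Rightarrow> 'g"

definition gV :: "('x, 'g) mgraph \<Rightarrow> 'x set" where
  "gV G = {x \<in> gX G. gr G x = x}"

definition gH :: "('x, 'g) mgraph \<Rightarrow> 'x set" where
  "gH G = gX G - gV G"

definition Hv :: "('x, 'g) mgraph \<Rightarrow> 'x \<Rightarrow> 'x set" where
  "Hv G v = {e \<in> gH G. gr G e = v}"

definition adj :: "('x, 'g) mgraph \<Rightarrow> ('x \<times> 'x) set" where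
  "adj G = {(gr G e, gr G (gi G e)) | e. e \<in> gH G}"

definition is_graph :: "('x, 'g) mgraph \<Rightarrow> bool" where
  "is_graph G \<longleftrightarrow>
     finite (gX G) \<and> gX G \<noteq> {} \<and>
     (\<forall>x\<in>gX G. gr G x \<in> gX G \<and> gr G (gr G x) = gr G x) \<and>
     (\<forall>x\<in>gX G. gi G x \<in> gX G \<and> gi G (gi G x) = x) \<and>
     (\<forall>x\<in>gX G. gi G x = x \<longleftrightarrow> gr G x = x) \<and>
     (\<forall>v\<in>gV G. \<forall>w\<in>gV G. (v, w) \<in> (adj G)\<^sup>*)"

definition metrised_graph :: "'g::ab_group_add set \<Rightarrow> ('x, 'g) mgraph \<Rightarrow> bool" where
  "metrised_graph M G \<longleftrightarrow> is_graph G \<and>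
     (\<forall>x\<in>gX G. gl G (gi G x) = gl G x \<and> gl G x \<in> M \<and> (gl G x = 0 \<longleftrightarrow> x \<in> gV G))"

definition divisor :: "('x, 'g) mgraph \<Rightarrow> ('x \<Rightarrow> int) \<Rightarrow> bool" where
  "divisor G D \<longleftrightarrow> (\<forall>x. x \<notin> gV G \<longrightarrow> D x = 0)"

definition effective :: "('x, 'g) mgraph \<Rightarrow> ('x \<Rightarrow> int) \<Rightarrow> bool" where
  "effective G D \<longleftrightarrow> divisor G D \<and> (\<forall>v. 0 \<le> D v)"

definition deg :: "('x, 'g) mgraph \<Rightarrow> ('x \<Rightarrow> int) \<Rightarrow> int" where
  "deg G D = (\<Sum>v\<in>gV G. D v)"

definition effdivs :: "('x, 'g) mgraph \<Rightarrow> int \<Rightarrow> ('x \<Rightarrow> int) set" where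
  "effdivs G k = {F. effective G F \<and> deg G F = k}"

definition PL :: "('x, 'g::ab_group_add) mgraph \<Rightarrow> ('x \<Rightarrow> 'g) set" where
  "PL G = {g. (\<forall>x. x \<notin> gV G \<longrightarrow> g x = 0) \<and>
              (\<forall>e\<in>gH G. g (gr G e) - g (gr G (gi G e)) \<in> zspan (gl G e))}"

definition Delta :: "('x, 'g::ab_group_add) mgraph \<Rightarrow> ('x \<Rightarrow> 'g) \<Rightarrow> ('x \<Rightarrow> int)" where
  "Delta G g = (\<lambda>v. if v \<in> gV G
       then (\<Sum>e\<in>Hv G v. zdiv (g v - g (gr G (gi G e))) (gl G e)) else 0)"

definition Prin :: "('x, 'g::ab_group_add) mgraph \<Rightarrow> ('x \<Rightarrow> int) set" where
  "Prin G = Delta G ` PL G"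

definition linsys :: "('x, 'g::ab_group_add) mgraph \<Rightarrow> ('x \<Rightarrow> int) \<Rightarrow> ('x \<Rightarrow> int) set" where
  "linsys G D = {E. effective G E \<and> E - D \<in> Prin G}"

definition rank :: "('x, 'g::ab_group_add) mgraph \<Rightarrow> ('x \<Rightarrow> int) \<Rightarrow> int" where
  "rank G D = (GREATEST k::int. \<forall>F\<in>effdivs G k. linsys G (D - F) \<noteq> {})"

definition morphism :: "('x, 'g::ab_group_add) mgraph \<Rightarrow> ('y, 'g) mgraph \<Rightarrow> ('x \<Rightarrow> 'y) \<Rightarrow> bool" where
  "morphism G G' \<phi> \<longleftrightarrow>
     (\<forall>x\<in>gX G. \<phi> x \<in> gX G') \<and>
     (\<forall>v\<in>gV G. \<phi> v \<in> gV G') \<and>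
     (\<forall>e\<in>gH G. \<phi> e \<in> gH G' \<longrightarrow>
        \<phi> (gr G e) = gr G' (\<phi> e) \<and>
        \<phi> (gr G (gi G e)) = gr G' (gi G' (\<phi> e)) \<and>
        gl G' (\<phi> e) \<in> zspan (gl G e)) \<and>
     (\<forall>e\<in>gH G. \<phi> e \<in> gV G' \<longrightarrow>
        \<phi> (gr G e) = \<phi> e \<and> \<phi> (gr G (gi G e)) = \<phi> e)"

definition slope :: "('x, 'g::ab_group_add) mgraph \<Rightarrow> ('y, 'g) mgraph \<Rightarrow> ('x \<Rightarrow> 'y) \<Rightarrow> 'x \<Rightarrow> int" where
  "slope G G' \<phi> e = (if \<phi> e \<in> gH G' then zdiv (gl G' (\<phi> e)) (gl G e) else 0)"

definition mloc :: "('x, 'g::ab_group_add) mgraph \<Rightarrow> ('y, 'g) mgraph \<Rightarrow> ('x \<Rightarrow> 'y) \<Rightarrow> 'x \<Rightarrow> 'y \<Rightarrow> int" where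
  "mloc G G' \<phi> v e' = (\<Sum>e\<in>{e \<in> Hv G v. \<phi> e = e'}. slope G G' \<phi> e)"

definition harmonic :: "('x, 'g::ab_group_add) mgraph \<Rightarrow> ('y, 'g) mgraph \<Rightarrow> ('x \<Rightarrow> 'y) \<Rightarrow> bool" where
  "harmonic G G' \<phi> \<longleftrightarrow>
     (\<forall>v\<in>gV G. \<forall>e1\<in>Hv G' (\<phi> v). \<forall>e2\<in>Hv G' (\<phi> v). mloc G G' \<phi> v e1 = mloc G G' \<phi> v e2)"

text \<open>The common value m_phi(v) (unspecified if H'_{phi(v)} is empty).\<close>
definition mult :: "('x, 'g::ab_group_add) mgraph \<Rightarrow> ('y, 'g) mgraph \<Rightarrow> ('x \<Rightarrow> 'y) \<Rightarrow> 'x \<Rightarrow> int" where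
  "mult G G' \<phi> v = (SOME k. \<forall>e'\<in>Hv G' (\<phi> v). mloc G G' \<phi> v e' = k)"

definition nondegenerate :: "('x, 'g::ab_group_add) mgraph \<Rightarrow> ('y, 'g) mgraph \<Rightarrow> ('x \<Rightarrow> 'y) \<Rightarrow> bool" where
  "nondegenerate G G' \<phi> \<longleftrightarrow> (\<forall>v\<in>gV G. mult G G' \<phi> v > 0)"

definition pullback :: "('x, 'g::ab_group_add) mgraph \<Rightarrow> ('y, 'g) mgraph \<Rightarrow> ('x \<Rightarrow> 'y) \<Rightarrow> ('y \<Rightarrow> int) \<Rightarrow> ('x \<Rightarrow> int)" where
  "pullback G G' \<phi> D' = (\<lambda>v. if v \<in> gV G then D' (\<phi> v) * mult G G' \<phi> v else 0)"

end

theory Submission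
  imports Defs "HOL-Library.Function_Algebras"
begin

text \<open>Push an effective divisor F on \<Gamma> of degree r = r(D') forward along \<phi>. Its image
  has the same degree, so D' - \<phi>_*F is equivalent to an effective E'. Harmonicity makes
  the Laplacian commute with pulling back piecewise linear functions, hence
  \<phi>^*E' is effective and equivalent to \<phi>^*D' - \<phi>^*\<phi>_*F, and non-degeneracy
  (m(v) \<ge> 1) gives \<phi>^*\<phi>_*F \<ge> F. Adding the effective divisor \<phi>^*\<phi>_*F - F shows
  that \<phi>^*D' - F is equivalent to an effective divisor.\<close>

lemma zmul_0 [simp]: "zmul 0 x = 0"
  by (simp add: zmul_def)

lemma zmul_succ: "zmul (k + 1) x = zmul k x + x"
proof (cases "0 \<le> k")
  case True
  then have "nat (k + 1) = Suc (nat k)" by simp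
  with True show ?thesis by (simp add: zmul_def)
next
  case False
  then have "zmul (k + 1) x = - (\<Sum>_<nat (- (k + 1)). x)"
    by (cases "k = -1") (auto simp: zmul_def)
  moreover have "nat (- k) = Suc (nat (- (k + 1)))" using False by simp
  ultimately show ?thesis using False by (simp add: zmul_def)
qed

lemma zmul_add: "zmul (a + b) x = zmul a x + zmul b x"
proof (induction b rule: int_induct[where k = 0])
  case base
  then show ?case by simp
next
  case (step1 i)
  then show ?case
    using zmul_succ[of "a + i" x] zmul_succ[of i x] by (simp add: add.assoc[symmetric])
next
  case (step2 i)
  then show ?case
    using zmul_succ[of "a + (i - 1)" x] zmul_succ[of "i - 1" x] by (simp add: algebra_simps)
qed

lemma zmul_minus: "zmul (- a) x = - zmul a x"
  using zmul_add[of a "- a" x] by (simp add: add_eq_0_iff2 add.commute)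

lemma zmul_diff: "zmul (a - b) x = zmul a x - zmul b x"
  using zmul_add[of a "- b" x] zmul_minus[of b x] by simp

lemma zmul_zmul: "zmul a (zmul b x) = zmul (a * b) x"
proof (induction a rule: int_induct[where k = 0])
  case base
  then show ?case by simp
next
  case (step1 i)
  then show ?case
    using zmul_succ[of i "zmul b x"] zmul_add[of "i * b" b x] by (simp add: algebra_simps)
next
  case (step2 i)
  then show ?case
    using zmul_succ[of "i - 1" "zmul b x"] zmul_diff[of "i * b" b x] by (simp add: algebra_simps)
qed

context
  fixes M :: "'g::ab_group_add set"
  assumes M: "sharp_integral_monoid M"
begin

lemma zmul_nat_in_monoid:
  assumes "x \<in> M"
  shows "zmul (int n) x \<in> M"
proof (induction n)
  case 0
  then show ?case using M by (simp add: sharp_integral_monoid_def)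
next
  case (Suc n)
  then show ?case
    using zmul_succ[of "int n" x] M assms by (simp add: sharp_integral_monoid_def add.commute)
qed

text \<open>Sharpness makes the groupification torsion-free on M: if (n+1) x = 0 then
  n x + x = 0 with both summands in M, so x = 0.\<close>
lemma zmul_left_inj:
  assumes x: "x \<in> M" "x \<noteq> 0" and eq: "zmul a x = zmul b x"
  shows "a = b"
proof (rule ccontr)
  assume "a \<noteq> b"
  obtain k where k: "k > 0" "zmul k x = 0"
  proof (cases "a > b")
    case True
    then show ?thesis using eq zmul_diff[of a b x] that[of "a - b"] by simp
  next
    case False
    then show ?thesis using eq \<open>a \<noteq> b\<close> zmul_diff[of b a x] that[of "b - a"] by simp
  qed
  then have "zmul (int (nat (k - 1))) x + x = 0"
    using zmul_succ[of "k - 1" x] by simp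
  then have "x = 0"
    using zmul_nat_in_monoid[OF x(1)] x(1) M unfolding sharp_integral_monoid_def by blast
  with x(2) show False ..
qed

lemma zdiv_zmul [simp]:
  assumes "x \<in> M" "x \<noteq> 0"
  shows "zdiv (zmul k x) x = k"
  unfolding zdiv_def by (rule the_equality) (use zmul_left_inj[OF assms] in auto)

end

lemma gV_subset_gX: "gV G \<subseteq> gX G"
  by (auto simp: gV_def)

lemma gH_subset_gX: "gH G \<subseteq> gX G"
  by (auto simp: gH_def)

lemma Hv_subset_gH: "Hv G v \<subseteq> gH G"
  by (auto simp: Hv_def)

context
  fixes G :: "('x, 'g) mgraph"
  assumes G: "is_graph G"
begin

lemma finite_gX: "finite (gX G)"
  using G by (simp add: is_graph_def)

lemma finite_gV: "finite (gV G)"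
  using finite_gX gV_subset_gX by (rule finite_subset[rotated])

lemma finite_gH: "finite (gH G)"
  using finite_gX gH_subset_gX by (rule finite_subset[rotated])

lemma finite_Hv: "finite (Hv G v)"
  using finite_gH Hv_subset_gH by (rule finite_subset[rotated])

lemma gr_in_gV: "x \<in> gX G \<Longrightarrow> gr G x \<in> gV G"
  using G by (simp add: is_graph_def gV_def)

lemma gV_nonempty: "gV G \<noteq> {}"
proof -
  have "gX G \<noteq> {}" using G by (simp add: is_graph_def)
  then obtain x where "x \<in> gX G" by blast
  then show ?thesis using gr_in_gV by blast
qed

lemma gi_in_gX: "x \<in> gX G \<Longrightarrow> gi G x \<in> gX G"
  using G by (simp add: is_graph_def)

lemma gi_gi: "x \<in> gX G \<Longrightarrow> gi G (gi G x) = x"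
  using G by (simp add: is_graph_def)

lemma gi_gi_gH: "e \<in> gH G \<Longrightarrow> gi G (gi G e) = e"
  by (simp add: gi_gi gH_def)

lemma gi_fixed_iff_gr_fixed: "x \<in> gX G \<Longrightarrow> gi G x = x \<longleftrightarrow> gr G x = x"
  using G by (simp add: is_graph_def)

lemma gi_in_gH:
  assumes e: "e \<in> gH G"
  shows "gi G e \<in> gH G"
proof -
  have eX: "e \<in> gX G" and "gr G e \<noteq> e" using e by (auto simp: gH_def gV_def)
  then have "gi G e \<noteq> e" using gi_fixed_iff_gr_fixed by blast
  then have "gi G (gi G e) \<noteq> gi G e" using gi_gi[OF eX] by simp
  then have "gr G (gi G e) \<noteq> gi G e" using gi_fixed_iff_gr_fixed[OF gi_in_gX[OF eX]] by simp
  then show ?thesis using gi_in_gX[OF eX] by (simp add: gH_def gV_def)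
qed

lemma gr_gH_in_gV: "e \<in> gH G \<Longrightarrow> gr G e \<in> gV G"
  by (rule gr_in_gV) (simp add: gH_def)

lemma gr_gi_gH_in_gV: "e \<in> gH G \<Longrightarrow> gr G (gi G e) \<in> gV G"
  by (rule gr_gH_in_gV[OF gi_in_gH])

end

context
  fixes M :: "'g::ab_group_add set" and G :: "('x, 'g) mgraph"
  assumes G: "metrised_graph M G"
begin

lemma gl_gH_in_monoid: "e \<in> gH G \<Longrightarrow> gl G e \<in> M"
  using G by (simp add: metrised_graph_def gH_def)

lemma gl_gH_nonzero: "e \<in> gH G \<Longrightarrow> gl G e \<noteq> 0"
  using G by (simp add: metrised_graph_def gH_def)

lemma gl_gi: "x \<in> gX G \<Longrightarrow> gl G (gi G x) = gl G x"
  using G by (simp add: metrised_graph_def)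

end

lemma metrised_graph_is_graph: "metrised_graph M G \<Longrightarrow> is_graph G"
  by (simp add: metrised_graph_def)

definition PL_slope :: "('x, 'g::ab_group_add) mgraph \<Rightarrow> ('x \<Rightarrow> 'g) \<Rightarrow> 'x \<Rightarrow> int" where
  "PL_slope G g e = zdiv (g (gr G e) - g (gr G (gi G e))) (gl G e)"

lemma Delta_eq_sum_PL_slope:
  "v \<in> gV G \<Longrightarrow> Delta G g v = (\<Sum>e\<in>Hv G v. PL_slope G g e)"
  unfolding Delta_def PL_slope_def by (auto simp: Hv_def intro!: sum.cong)

context
  fixes M :: "'g::ab_group_add set" and G :: "('x, 'g) mgraph"
  assumes M: "sharp_integral_monoid M" and G: "metrised_graph M G"
begin

lemma PL_diff_eq_zmul_PL_slope:
  assumes "g \<in> PL G" "e \<in> gH G"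
  shows "g (gr G e) - g (gr G (gi G e)) = zmul (PL_slope G g e) (gl G e)"
proof -
  obtain k where "g (gr G e) - g (gr G (gi G e)) = zmul k (gl G e)"
    using assms unfolding PL_def zspan_def by auto
  then show ?thesis
    using zdiv_zmul[OF M gl_gH_in_monoid[OF G] gl_gH_nonzero[OF G]] assms(2)
    by (simp add: PL_slope_def)
qed

lemma PL_slope_gi:
  assumes g: "g \<in> PL G" and e: "e \<in> gH G"
  shows "PL_slope G g (gi G e) = - PL_slope G g e"
proof -
  have eX: "e \<in> gX G" using e by (simp add: gH_def)
  have "g (gr G (gi G e)) - g (gr G (gi G (gi G e))) = zmul (- PL_slope G g e) (gl G e)"
    using PL_diff_eq_zmul_PL_slope[OF g e] gi_gi[OF metrised_graph_is_graph[OF G] eX]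
    by (metis minus_diff_eq zmul_minus)
  then show ?thesis
    using zdiv_zmul[OF M gl_gH_in_monoid[OF G e] gl_gH_nonzero[OF G e]] gl_gi[OF G eX]
    by (simp add: PL_slope_def)
qed

text \<open>Every half-edge is counted once at its root, and the contributions of e and i(e)
  cancel.\<close>
lemma deg_Delta_PL:
  assumes g: "g \<in> PL G"
  shows "deg G (Delta G g) = 0"
proof -
  have graph: "is_graph G" using G by (rule metrised_graph_is_graph)
  let ?s = "PL_slope G g"
  have "(\<Sum>e\<in>gH G. ?s e) = (\<Sum>e\<in>gH G. ?s (gi G e))"
    using gi_in_gH[OF graph] gi_gi_gH[OF graph]
    by (intro sum.reindex_bij_witness[of _ "gi G" "gi G"]) auto
  also have "\<dots> = - (\<Sum>e\<in>gH G. ?s e)"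
    using PL_slope_gi[OF g] by (simp add: sum_negf)
  finally have sum_zero: "(\<Sum>e\<in>gH G. ?s e) = 0" by simp
  have "deg G (Delta G g) = (\<Sum>v\<in>gV G. \<Sum>e\<in>{e \<in> gH G. gr G e = v}. ?s e)"
    unfolding deg_def by (rule sum.cong) (simp_all add: Delta_eq_sum_PL_slope Hv_def)
  also have "\<dots> = (\<Sum>e\<in>gH G. ?s e)"
    using finite_gV[OF graph] finite_gH[OF graph] gr_gH_in_gV[OF graph] by (intro sum.group) auto
  finally show ?thesis using sum_zero by simp
qed

end

lemma deg_add: "deg G (A + B) = deg G A + deg G B"
  by (simp add: deg_def sum.distrib)

lemma deg_diff: "deg G (A - B) = deg G A - deg G B"
  by (simp add: deg_def sum_subtractf)

lemma deg_nonneg_effective: "effective G E \<Longrightarrow> 0 \<le> deg G E"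
  by (simp add: effective_def deg_def sum_nonneg)

lemma effdivs_negative: "k < 0 \<Longrightarrow> effdivs G k = {}"
  using deg_nonneg_effective by (fastforce simp: effdivs_def)

lemma int_Greatest_bounded:
  fixes P :: "int \<Rightarrow> bool"
  assumes "P r" and bound: "\<And>k. P k \<Longrightarrow> k \<le> b"
  shows "P (GREATEST k. P k)" and "r \<le> (GREATEST k. P k)"
proof -
  define S where "S = {k. P k \<and> r \<le> k}"
  have "S \<subseteq> {r..b}" using bound by (auto simp: S_def)
  then have fin: "finite S" by (rule finite_subset) simp
  have "r \<in> S" using assms(1) by (simp add: S_def)
  then have max_S: "Max S \<in> S" using fin Max_in by blast
  have "(GREATEST k. P k) = Max S"
  proof (rule Greatest_equality)
    show "P (Max S)" using max_S by (simp add: S_def)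
  next
    fix k assume "P k"
    show "k \<le> Max S"
    proof (cases "r \<le> k")
      case True
      then show ?thesis using \<open>P k\<close> fin by (simp add: S_def)
    next
      case False
      then show ?thesis using max_S by (simp add: S_def)
    qed
  qed
  then show "P (GREATEST k. P k)" and "r \<le> (GREATEST k. P k)" using max_S by (simp_all add: S_def)
qed

context
  fixes M :: "'g::ab_group_add set" and G :: "('x, 'g) mgraph"
  assumes M: "sharp_integral_monoid M" and G: "metrised_graph M G"
begin

text \<open>Putting all k chips on one vertex leaves a divisor of negative degree, which is
  not equivalent to an effective one since principal divisors have degree 0.\<close>
lemma rank_condition_le_max_deg:
  assumes "\<forall>F\<in>effdivs G k. linsys G (D - F) \<noteq> {}"
  shows "k \<le> max 0 (deg G D)"
proof (rule ccontr)
  assume k: "\<not> k \<le> max 0 (deg G D)"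
  obtain v where v: "v \<in> gV G" using gV_nonempty[OF metrised_graph_is_graph[OF G]] by blast
  define F where "F = (\<lambda>x. if x = v then k else 0)"
  have "effective G F" using k v by (auto simp: F_def effective_def divisor_def)
  moreover have "deg G F = k"
    using v finite_gV[OF metrised_graph_is_graph[OF G]] by (simp add: deg_def F_def)
  ultimately obtain E where E: "effective G E" "E - (D - F) \<in> Prin G"
    using assms by (auto simp: effdivs_def linsys_def)
  then obtain g where g: "g \<in> PL G" "E - (D - F) = Delta G g" by (auto simp: Prin_def)
  have "deg G E = deg G (D - F) + deg G (E - (D - F))"
    by (simp flip: deg_add)
  also have "\<dots> = deg G D - k"
    using g deg_Delta_PL[OF M G] \<open>deg G F = k\<close> by (simp add: deg_diff)
  finally show False using deg_nonneg_effective[OF E(1)] k by simp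
qed

lemma rank_ge:
  assumes "\<forall>F\<in>effdivs G r. linsys G (D - F) \<noteq> {}"
  shows "r \<le> rank G D"
  unfolding rank_def
  by (rule int_Greatest_bounded(2)[of "\<lambda>k. \<forall>F\<in>effdivs G k. linsys G (D - F) \<noteq> {}",
        OF assms rank_condition_le_max_deg])

lemma rank_attained: "\<forall>F\<in>effdivs G (rank G D). linsys G (D - F) \<noteq> {}"
proof -
  have "\<forall>F\<in>effdivs G (-1). linsys G (D - F) \<noteq> {}" by (simp add: effdivs_negative)
  then show ?thesis
    unfolding rank_def
    by (rule int_Greatest_bounded(1)[of "\<lambda>k. \<forall>F\<in>effdivs G k. linsys G (D - F) \<noteq> {}",
          OF _ rank_condition_le_max_deg])
qed

end

definition PL_pullback :: "('x, 'g::zero) mgraph \<Rightarrow> ('x \<Rightarrow> 'y) \<Rightarrow> ('y \<Rightarrow> 'g) \<Rightarrow> 'x \<Rightarrow> 'g" where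
  "PL_pullback G \<phi> g = (\<lambda>x. if x \<in> gV G then g (\<phi> x) else 0)"

lemma morphism_gV: "morphism G G' \<phi> \<Longrightarrow> v \<in> gV G \<Longrightarrow> \<phi> v \<in> gV G'"
  by (simp add: morphism_def)

lemma morphism_contracted_edge:
  assumes mor: "morphism G G' \<phi>" and e: "e \<in> gH G" and contracted: "\<phi> e \<notin> gH G'"
  shows "\<phi> (gr G e) = \<phi> (gr G (gi G e))"
proof -
  have "\<phi> e \<in> gV G'"
    using mor e contracted by (simp add: morphism_def gH_def)
  then show ?thesis using mor e by (simp add: morphism_def)
qed

lemma morphism_gr:
  assumes "morphism G G' \<phi>" "e \<in> gH G" "\<phi> e \<in> gH G'"
  shows "\<phi> (gr G e) = gr G' (\<phi> e)" and "\<phi> (gr G (gi G e)) = gr G' (gi G' (\<phi> e))"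
  using assms unfolding morphism_def by blast+

lemma mloc_eq_mult:
  assumes harm: "harmonic G G' \<phi>" and v: "v \<in> gV G" and e': "e' \<in> Hv G' (\<phi> v)"
  shows "mloc G G' \<phi> v e' = mult G G' \<phi> v"
proof -
  have "\<forall>e''\<in>Hv G' (\<phi> v). mloc G G' \<phi> v e'' = mloc G G' \<phi> v e'"
    using harm v e' unfolding harmonic_def by blast
  then have "\<forall>e''\<in>Hv G' (\<phi> v). mloc G G' \<phi> v e'' = mult G G' \<phi> v"
    unfolding mult_def by (rule someI[where P = "\<lambda>k. \<forall>e''\<in>Hv G' (\<phi> v). mloc G G' \<phi> v e'' = k"])
  with e' show ?thesis by blast
qed

lemma slope_eq_0_off_star:
  assumes mor: "morphism G G' \<phi>" and e: "e \<in> Hv G v" and off: "\<phi> e \<notin> Hv G' (\<phi> v)"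
  shows "slope G G' \<phi> e = 0"
proof (rule ccontr)
  assume "slope G G' \<phi> e \<noteq> 0"
  then have "\<phi> e \<in> gH G'" by (auto simp: slope_def split: if_splits)
  moreover have "e \<in> gH G" "gr G e = v" using e by (simp_all add: Hv_def)
  ultimately have "gr G' (\<phi> e) = \<phi> v" using morphism_gr(1)[OF mor] by metis
  with \<open>\<phi> e \<in> gH G'\<close> off show False by (simp add: Hv_def)
qed

context
  fixes M :: "'g::ab_group_add set" and G :: "('x, 'g) mgraph" and G' :: "('y, 'g) mgraph"
    and \<phi> :: "'x \<Rightarrow> 'y"
  assumes M: "sharp_integral_monoid M" and G: "metrised_graph M G" and G': "metrised_graph M G'"
    and mor: "morphism G G' \<phi>"
begin

lemma morphism_gl:
  assumes e: "e \<in> gH G" and e': "\<phi> e \<in> gH G'"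
  shows "gl G' (\<phi> e) = zmul (slope G G' \<phi> e) (gl G e)"
proof -
  have "gl G' (\<phi> e) \<in> zspan (gl G e)"
    using mor e e' unfolding morphism_def by blast
  then obtain k where "gl G' (\<phi> e) = zmul k (gl G e)"
    by (auto simp: zspan_def)
  then show ?thesis
    using e' zdiv_zmul[OF M gl_gH_in_monoid[OF G e] gl_gH_nonzero[OF G e]]
    by (simp add: slope_def)
qed

lemma PL_pullback_diff:
  assumes g: "g \<in> PL G'" and e: "e \<in> gH G"
  shows "PL_pullback G \<phi> g (gr G e) - PL_pullback G \<phi> g (gr G (gi G e))
    = zmul (slope G G' \<phi> e * PL_slope G' g (\<phi> e)) (gl G e)"
proof -
  have ends: "gr G e \<in> gV G" "gr G (gi G e) \<in> gV G"
    using gr_gH_in_gV[OF _ e] gr_gi_gH_in_gV[OF _ e] metrised_graph_is_graph[OF G] by simp_all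
  show ?thesis
  proof (cases "\<phi> e \<in> gH G'")
    case True
    have "g (\<phi> (gr G e)) - g (\<phi> (gr G (gi G e))) = zmul (PL_slope G' g (\<phi> e)) (gl G' (\<phi> e))"
      using morphism_gr[OF mor e True] PL_diff_eq_zmul_PL_slope[OF M G' g True] by simp
    also have "\<dots> = zmul (slope G G' \<phi> e * PL_slope G' g (\<phi> e)) (gl G e)"
      using morphism_gl[OF e True] by (simp add: zmul_zmul mult.commute)
    finally show ?thesis using ends by (simp add: PL_pullback_def)
  next
    case False
    then show ?thesis
      using ends morphism_contracted_edge[OF mor e False] by (simp add: PL_pullback_def slope_def)
  qed
qed

lemma PL_pullback_in_PL: "g \<in> PL G' \<Longrightarrow> PL_pullback G \<phi> g \<in> PL G"
  using PL_pullback_diff by (auto simp: PL_def PL_pullback_def zspan_def)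

lemma PL_slope_PL_pullback:
  assumes "g \<in> PL G'" "e \<in> gH G"
  shows "PL_slope G (PL_pullback G \<phi> g) e = slope G G' \<phi> e * PL_slope G' g (\<phi> e)"
  using PL_pullback_diff[OF assms]
    zdiv_zmul[OF M gl_gH_in_monoid[OF G assms(2)] gl_gH_nonzero[OF G assms(2)]]
  by (simp add: PL_slope_def)

text \<open>Harmonicity is what makes the Laplacian commute with pulling back: grouping the
  half-edges at v by their images, each e' at \<phi>(v) receives total slope m(v).\<close>
lemma Delta_PL_pullback:
  assumes harm: "harmonic G G' \<phi>" and g: "g \<in> PL G'"
  shows "Delta G (PL_pullback G \<phi> g) = pullback G G' \<phi> (Delta G' g)"
proof
  fix v
  show "Delta G (PL_pullback G \<phi> g) v = pullback G G' \<phi> (Delta G' g) v"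
  proof (cases "v \<in> gV G")
    case False
    then show ?thesis by (simp add: Delta_def pullback_def)
  next
    case v: True
    let ?B = "Hv G' (\<phi> v)" and ?t = "\<lambda>e. slope G G' \<phi> e * PL_slope G' g (\<phi> e)"
    have fin: "finite (Hv G v)" "finite ?B"
      using finite_Hv[OF metrised_graph_is_graph[OF G]] finite_Hv[OF metrised_graph_is_graph[OF G']]
      by blast+
    have star: "(\<Sum>e\<in>{e \<in> Hv G v. \<phi> e = e'}. ?t e) = mloc G G' \<phi> v e' * PL_slope G' g e'"
      for e'
      unfolding mloc_def sum_distrib_right by (rule sum.cong) simp_all
    have "Delta G (PL_pullback G \<phi> g) v = (\<Sum>e\<in>Hv G v. ?t e)"
      unfolding Delta_eq_sum_PL_slope[OF v]
      by (rule sum.cong[OF refl]) (simp add: PL_slope_PL_pullback[OF g] Hv_def)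
    also have "\<dots> = (\<Sum>e\<in>{e \<in> Hv G v. \<phi> e \<in> ?B}. ?t e)"
      by (rule sum.mono_neutral_right) (use fin slope_eq_0_off_star[OF mor] in auto)
    also have "\<dots> = (\<Sum>e'\<in>?B. \<Sum>e\<in>{e \<in> {e \<in> Hv G v. \<phi> e \<in> ?B}. \<phi> e = e'}. ?t e)"
      by (rule sum.group[symmetric]) (use fin in auto)
    also have "\<dots> = (\<Sum>e'\<in>?B. mloc G G' \<phi> v e' * PL_slope G' g e')"
    proof (rule sum.cong[OF refl])
      fix e' assume "e' \<in> ?B"
      then have "{e \<in> {e \<in> Hv G v. \<phi> e \<in> ?B}. \<phi> e = e'} = {e \<in> Hv G v. \<phi> e = e'}" by auto
      then show "(\<Sum>e\<in>{e \<in> {e \<in> Hv G v. \<phi> e \<in> ?B}. \<phi> e = e'}. ?t e)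
          = mloc G G' \<phi> v e' * PL_slope G' g e'" by (simp only: star)
    qed
    also have "\<dots> = mult G G' \<phi> v * (\<Sum>e'\<in>?B. PL_slope G' g e')"
      unfolding sum_distrib_left by (rule sum.cong[OF refl]) (simp add: mloc_eq_mult[OF harm v])
    also have "\<dots> = pullback G G' \<phi> (Delta G' g) v"
      using v morphism_gV[OF mor v] by (simp add: pullback_def Delta_eq_sum_PL_slope)
    finally show ?thesis .
  qed
qed

end

definition pushforward :: "('x, 'g) mgraph \<Rightarrow> ('x \<Rightarrow> 'y) \<Rightarrow> ('x \<Rightarrow> int) \<Rightarrow> 'y \<Rightarrow> int" where
  "pushforward G \<phi> F = (\<lambda>y. \<Sum>v\<in>{v \<in> gV G. \<phi> v = y}. F v)"

lemma effective_pushforward: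
  assumes mor: "morphism G G' \<phi>" and F: "effective G F"
  shows "effective G' (pushforward G \<phi> F)"
proof -
  have "pushforward G \<phi> F y = 0" if "y \<notin> gV G'" for y
    unfolding pushforward_def by (rule sum.neutral) (use morphism_gV[OF mor] that in blast)
  then show ?thesis
    using F by (auto simp: effective_def divisor_def pushforward_def intro: sum_nonneg)
qed

lemma deg_pushforward:
  assumes "is_graph G" "is_graph G'" "morphism G G' \<phi>"
  shows "deg G' (pushforward G \<phi> F) = deg G F"
  unfolding deg_def pushforward_def
  using finite_gV[OF assms(1)] finite_gV[OF assms(2)] morphism_gV[OF assms(3)]
  by (intro sum.group) auto

lemma pullback_diff: "pullback G G' \<phi> (A - B) = pullback G G' \<phi> A - pullback G G' \<phi> B"
  by (simp add: pullback_def fun_eq_iff algebra_simps)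

lemma effective_pullback:
  assumes "nondegenerate G G' \<phi>" "effective G' D'"
  shows "effective G (pullback G G' \<phi> D')"
  using assms by (auto simp: nondegenerate_def effective_def divisor_def pullback_def)

text \<open>A vertex v carries F(v) chips, at most the F-content of the fibre over \<phi>(v), and
  pulling back multiplies that by m(v) \<ge> 1.\<close>
lemma effective_pullback_pushforward_minus:
  assumes graph: "is_graph G" and nd: "nondegenerate G G' \<phi>" and F: "effective G F"
  shows "effective G (pullback G G' \<phi> (pushforward G \<phi> F) - F)"
proof -
  have "F v \<le> pullback G G' \<phi> (pushforward G \<phi> F) v" if v: "v \<in> gV G" for v
  proof -
    have F_nonneg: "\<And>x. 0 \<le> F x" using F by (simp add: effective_def)
    have "F v \<le> pushforward G \<phi> F (\<phi> v)"
      unfolding pushforward_def using v finite_gV[OF graph] F_nonneg by (intro member_le_sum) auto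
    also have "\<dots> \<le> pushforward G \<phi> F (\<phi> v) * mult G G' \<phi> v"
    proof -
      have "0 < mult G G' \<phi> v" using nd v by (simp add: nondegenerate_def)
      moreover have "0 \<le> pushforward G \<phi> F (\<phi> v)" using F_nonneg by (simp add: pushforward_def sum_nonneg)
      ultimately show ?thesis by (simp add: mult_le_cancel_left1)
    qed
    finally show ?thesis using v by (simp add: pullback_def)
  qed
  then show ?thesis
    using F by (auto simp: effective_def divisor_def pullback_def)
qed

lemma linsys_add_effective:
  "E \<in> linsys G D \<Longrightarrow> effective G A \<Longrightarrow> E + A \<in> linsys G (D + A)"
  by (simp add: linsys_def effective_def divisor_def)

lemma pullback_linsys:
  assumes "sharp_integral_monoid M" "metrised_graph M G" "metrised_graph M G'"
    and "morphism G G' \<phi>" "harmonic G G' \<phi>" "nondegenerate G G' \<phi>"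
    and E': "E' \<in> linsys G' D'"
  shows "pullback G G' \<phi> E' \<in> linsys G (pullback G G' \<phi> D')"
proof -
  obtain g where g: "g \<in> PL G'" and "E' - D' = Delta G' g"
    using E' by (auto simp: linsys_def Prin_def)
  then have "pullback G G' \<phi> E' - pullback G G' \<phi> D' = Delta G (PL_pullback G \<phi> g)"
    using Delta_PL_pullback[OF assms(1-5) g] by (simp flip: pullback_diff)
  moreover have "PL_pullback G \<phi> g \<in> PL G"
    using PL_pullback_in_PL[OF assms(1-4) g] .
  ultimately show ?thesis
    using effective_pullback[OF assms(6)] E' by (auto simp: linsys_def Prin_def)
qed

theorem lemma3p7:
  fixes M :: "'g::ab_group_add set"
    and G :: "('x, 'g) mgraph" and G' :: "('y, 'g) mgraph"
    and \<phi> :: "'x \<Rightarrow> 'y" and D' :: "'y \<Rightarrow> int"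
  assumes "sharp_integral_monoid M"
    and "metrised_graph M G" and "metrised_graph M G'"
    and "morphism G G' \<phi>" and "harmonic G G' \<phi>" and "nondegenerate G G' \<phi>"
    and "effective G' D'"
  shows "rank G (pullback G G' \<phi> D') \<ge> rank G' D'"
proof -
  note graphs = metrised_graph_is_graph[OF assms(2)] metrised_graph_is_graph[OF assms(3)]
  let ?pull = "pullback G G' \<phi>" and ?r = "rank G' D'"
  have "linsys G (?pull D' - F) \<noteq> {}" if F: "F \<in> effdivs G ?r" for F
  proof -
    let ?F' = "pushforward G \<phi> F"
    have "?F' \<in> effdivs G' ?r"
      using F effective_pushforward[OF assms(4)] deg_pushforward[OF graphs assms(4)]
      by (simp add: effdivs_def)
    then obtain E' where "E' \<in> linsys G' (D' - ?F')"
      using rank_attained[OF assms(1,3)] by blast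
    from pullback_linsys[OF assms(1-6) this]
    have "?pull E' \<in> linsys G (?pull D' - ?pull ?F')"
      by (simp only: pullback_diff)
    then have "?pull E' + (?pull ?F' - F) \<in> linsys G (?pull D' - ?pull ?F' + (?pull ?F' - F))"
      using F effective_pullback_pushforward_minus[OF graphs(1) assms(6)]
      by (intro linsys_add_effective) (simp_all add: effdivs_def)
    then show ?thesis by auto
  qed
  then show ?thesis
    using rank_ge[OF assms(1,2)] by blast
qed

end
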